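(* Assume the standing assumptions, fix a function $h$ satisfying (h1)–(h4), and let $\sigma$ be a stopping time (with respect to an admissible filtration) with $\mathbf E\sigma<\infty$. Then $$\lim_{x\to\infty}\frac{\mathbf P(A_{\sigma,1}(x))}{\overline F(x)}=\mathbf E\sigma.$$
   Context: Standing assumptions: $\{\xi_n\}_{n\ge1}$ are i.i.d. real random variables with common distribution function $F$ and finite mean $\mathbf E\xi_1=-m<0$. $F$ is long-tailed: $\overline F(x)=1-F(x)>0$ for all $x$, and $\overline F(x-c)/\overline F(x)\to1$ as $x\to\infty$ for every fixed $c>0$. Notation: $S_0=0$ and $S_n=\sum_{i=1}^n\xi_i$. Admissible filtration: a stopping time $\sigma$ is taken with respect to a filtration $\{\mathcal F_n\}_{n\ge0}$ such that $\xi_n$ is $\mathcal F_n$-measurable and $\xi_{n+1}$ is independent of $\mathcal F_n$. The function $h:\mathbb R_+\to\mathbb R_+$ satisfies: - (h1) $h(x)\le x/2$ for all $x$; - (h2) $h(x)\to\infty$; - (h3) $\overline F(x-h(x))/\overline F(x)\to1$ as $x\to\infty$; - (h4) there exists $x_0$ with $h(x+t)\le h(x)+t$ for all $x\ge x_0$, $t\ge0$. For $x\ge0$, let $\mu(x)=\min\{n:S_n>x\}$, with $\min\emptyset=\infty$. Define $$A_{\sigma,1}(x)=\{\mu(x)\le\sigma,\ S_{\mu(x)-1}\le h(x)\}.$$ *)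

theory Defs
  imports "HOL-Probability.Probability"
begin

text \<open>Random walk \<open>S_n = \<xi>_1 + ... + \<xi>_n\<close>, \<open>S_0 = 0\<close> (the value \<open>\<xi> 0\<close> is unused).\<close>
definition rw :: "(nat \<Rightarrow> 'a \<Rightarrow> real) \<Rightarrow> nat \<Rightarrow> 'a \<Rightarrow> real" where
  "rw \<xi> n \<omega> = (\<Sum>i\<in>{1..n}. \<xi> i \<omega>)"

definition first_passage :: "(nat \<Rightarrow> 'a \<Rightarrow> real) \<Rightarrow> real \<Rightarrow> 'a \<Rightarrow> enat" where
  "first_passage \<xi> x \<omega> =
     (if \<exists>n. rw \<xi> n \<omega> > x then enat (LEAST n. rw \<xi> n \<omega> > x) else \<infinity>)"

definition A_sigma1 :: "'a measure \<Rightarrow> (nat \<Rightarrow> 'a \<Rightarrow> real) \<Rightarrow> ('a \<Rightarrow> enat) \<Rightarrow> (real \<Rightarrow> real)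
    \<Rightarrow> real \<Rightarrow> 'a set" where
  "A_sigma1 M \<xi> \<sigma> h x = {\<omega> \<in> space M. first_passage \<xi> x \<omega> \<le> \<sigma> \<omega> \<and>
      (\<exists>n. first_passage \<xi> x \<omega> = enat n \<and> rw \<xi> (n - 1) \<omega> \<le> h x)}"

definition enat_stopping_time :: "(nat \<Rightarrow> 'a measure) \<Rightarrow> ('a \<Rightarrow> enat) \<Rightarrow> bool" where
  "enat_stopping_time Fil \<sigma> \<longleftrightarrow> (\<forall>n::nat. {\<omega> \<in> space (Fil n). \<sigma> \<omega> \<le> enat n} \<in> sets (Fil n))"

end

theory Submission
  imports Defs
begin

text \<open>
  Only the step that crosses level \<open>x\<close> matters. Since \<open>S_{\<mu>(x)-1} \<le> h(x)\<close>, that step exceeds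
  \<open>x - h(x)\<close>, and it is the \<open>(n+1)\<close>-st step for some \<open>n < \<sigma>\<close>; as \<open>{n < \<sigma>}\<close> is independent of
  \<open>\<xi>_{n+1}\<close>, summing over \<open>n\<close> bounds \<open>P(A_{\<sigma>,1}(x))\<close> by \<open>E\<sigma> F\<^sup>-(x - h(x)) \<sim> E\<sigma> F\<^sup>-(x)\<close>.
  Conversely, on the disjoint events where the walk stays below \<open>h(x)\<close> up to time \<open>n < \<sigma>\<close>, ends
  above \<open>-c\<close>, and then jumps by more than \<open>x + c\<close>, the set \<open>A_{\<sigma>,1}(x)\<close> occurs. Their probabilities
  are at least \<open>(P(n < \<sigma>, S_n > -c) - \<Sum>_{k\<le>n} P(S_k > h(x))) F\<^sup>-(x + c)\<close>; letting \<open>x \<rightarrow> \<infinity>\<close>, then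
  \<open>c \<rightarrow> \<infinity>\<close>, then summing over more and more \<open>n\<close>, long-tailedness gives the matching lower bound.
\<close>

lemma rw_0 [simp]: "rw \<xi> 0 \<omega> = 0"
  by (simp add: rw_def)

lemma rw_Suc: "rw \<xi> (Suc n) \<omega> = rw \<xi> n \<omega> + \<xi> (Suc n) \<omega>"
  by (simp add: rw_def)

lemma first_passage_eq_enat_iff:
  "first_passage \<xi> x \<omega> = enat n \<longleftrightarrow> rw \<xi> n \<omega> > x \<and> (\<forall>k<n. rw \<xi> k \<omega> \<le> x)"
proof
  assume fp: "first_passage \<xi> x \<omega> = enat n"
  then have ex: "\<exists>n. rw \<xi> n \<omega> > x"
    by (auto simp: first_passage_def split: if_splits)
  with fp have "n = (LEAST n. rw \<xi> n \<omega> > x)"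
    by (simp add: first_passage_def)
  then show "rw \<xi> n \<omega> > x \<and> (\<forall>k<n. rw \<xi> k \<omega> \<le> x)"
    using LeastI_ex[OF ex] not_less_Least by (metis not_less)
next
  assume n: "rw \<xi> n \<omega> > x \<and> (\<forall>k<n. rw \<xi> k \<omega> \<le> x)"
  then have "(LEAST n. rw \<xi> n \<omega> > x) = n"
    by (intro Least_equality) (auto simp: not_less[symmetric])
  with n show "first_passage \<xi> x \<omega> = enat n"
    by (auto simp: first_passage_def)
qed

text \<open>Unlike \<open>nn_integral_enat_function\<close>, this only needs the events \<open>{t < f}\<close>.\<close>
lemma nn_integral_enat_eq_suminf:
  assumes "\<And>t::nat. {x \<in> space M. enat t < f x} \<in> sets M"
  shows "(\<integral>\<^sup>+ x. ennreal_of_enat (f x) \<partial>M) = (\<Sum>t. emeasure M {x \<in> space M. enat t < f x})"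
proof -
  define F where "F t = {x \<in> space M. enat t < f x}" for t :: nat
  have [measurable]: "F t \<in> sets M" for t
    using assms by (simp add: F_def)
  have "ennreal_of_enat (f x) = (\<Sum>t. indicator (F t) x)" if "x \<in> space M" for x
  proof -
    have "(\<lambda>t::nat. if t < f x then 1 else 0) sums ennreal_of_enat (f x)"
      using sums_If_finite[of "\<lambda>r. r < f x" "\<lambda>_. 1 :: ennreal"]
      by (cases "f x") (simp_all add: sums_def of_nat_tendsto_top_ennreal)
    also have "(\<lambda>t. if t < f x then 1 else 0) = (\<lambda>t. indicator (F t) x)"
      using that by (simp add: one_ennreal_def F_def fun_eq_iff)
    finally show ?thesis
      by (simp add: sums_iff)
  qed
  then have "(\<integral>\<^sup>+ x. ennreal_of_enat (f x) \<partial>M) = (\<integral>\<^sup>+ x. (\<Sum>t. indicator (F t) x) \<partial>M)"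
    by (simp cong: nn_integral_cong)
  also have "\<dots> = (\<Sum>t. emeasure M (F t))"
    by (simp add: nn_integral_suminf)
  finally show ?thesis
    by (simp add: F_def)
qed

context prob_space
begin

lemma prob_enat_less_sums:
  assumes "\<And>t::nat. {x \<in> space M. enat t < f x} \<in> events"
    and "(\<integral>\<^sup>+ x. ennreal_of_enat (f x) \<partial>M) < \<infinity>"
  shows "(\<lambda>t. prob {x \<in> space M. enat t < f x}) sums enn2real (\<integral>\<^sup>+ x. ennreal_of_enat (f x) \<partial>M)"
proof -
  let ?p = "\<lambda>t. prob {x \<in> space M. enat t < f x}"
  have "(\<integral>\<^sup>+ x. ennreal_of_enat (f x) \<partial>M) = (\<Sum>t. ennreal (?p t))"
    using assms(1) by (simp add: nn_integral_enat_eq_suminf emeasure_eq_measure)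
  moreover have "(\<lambda>t. ennreal (?p t)) sums (\<Sum>t. ennreal (?p t))"
    by (rule summable_sums) simp
  ultimately have "(\<lambda>t. ennreal (?p t)) sums ennreal (enn2real (\<integral>\<^sup>+ x. ennreal_of_enat (f x) \<partial>M))"
    using assms(2) by (simp add: less_top)
  then show ?thesis
    by (subst (asm) sums_ennreal) auto
qed

lemma prob_greater_tendsto_0:
  fixes X :: "'a \<Rightarrow> real"
  assumes [measurable]: "X \<in> borel_measurable M"
  shows "((\<lambda>t. prob {\<omega> \<in> space M. X \<omega> > t}) \<longlongrightarrow> 0) at_top"
proof -
  interpret D: real_distribution "distr M borel X"
    by simp
  have "prob {\<omega> \<in> space M. X \<omega> > t} = 1 - cdf (distr M borel X) t" for t
  proof -
    have "{\<omega> \<in> space M. X \<omega> > t} = space M - {\<omega> \<in> space M. X \<omega> \<le> t}"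
      by auto
    then have "prob {\<omega> \<in> space M. X \<omega> > t} = 1 - prob {\<omega> \<in> space M. X \<omega> \<le> t}"
      by (simp add: prob_compl)
    also have "prob {\<omega> \<in> space M. X \<omega> \<le> t} = cdf (distr M borel X) t"
      unfolding cdf_def by (subst measure_distr) (auto simp: vimage_def Int_def conj_commute)
    finally show ?thesis .
  qed
  moreover have "((\<lambda>t. 1 - cdf (distr M borel X) t) \<longlongrightarrow> 1 - 1) at_top"
    by (intro tendsto_intros D.cdf_lim_at_top_prob)
  ultimately show ?thesis
    by simp
qed

lemma prob_le_uminus_tendsto_0:
  fixes X :: "'a \<Rightarrow> real"
  assumes [measurable]: "X \<in> borel_measurable M"
  shows "((\<lambda>c. prob {\<omega> \<in> space M. X \<omega> \<le> - c}) \<longlongrightarrow> 0) at_top"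
proof -
  interpret D: real_distribution "distr M borel X"
    by simp
  have "prob {\<omega> \<in> space M. X \<omega> \<le> t} = cdf (distr M borel X) t" for t
    unfolding cdf_def by (subst measure_distr) (auto simp: vimage_def Int_def conj_commute)
  then show ?thesis
    using filterlim_compose[OF D.cdf_lim_at_bot filterlim_uminus_at_bot_at_top] by simp
qed

lemma prob_conj_greater_uminus_tendsto:
  fixes X :: "'a \<Rightarrow> real"
  assumes [measurable]: "X \<in> borel_measurable M" "Measurable.pred M P"
  shows "((\<lambda>c. prob {\<omega> \<in> space M. P \<omega> \<and> X \<omega> > - c}) \<longlongrightarrow> prob {\<omega> \<in> space M. P \<omega>}) at_top"
proof (rule tendsto_sandwich)
  define L where "L c = {\<omega> \<in> space M. X \<omega> \<le> - c}" for c
  show "\<forall>\<^sub>F c in at_top. prob {\<omega> \<in> space M. P \<omega>} - prob (L c)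
          \<le> prob {\<omega> \<in> space M. P \<omega> \<and> X \<omega> > - c}"
  proof (intro always_eventually allI)
    fix c
    have "prob {\<omega> \<in> space M. P \<omega>} \<le> prob ({\<omega> \<in> space M. P \<omega> \<and> X \<omega> > - c} \<union> L c)"
      by (intro finite_measure_mono) (auto simp: L_def)
    also have "\<dots> \<le> prob {\<omega> \<in> space M. P \<omega> \<and> X \<omega> > - c} + prob (L c)"
      by (intro measure_subadditive) (auto simp: L_def)
    finally show "prob {\<omega> \<in> space M. P \<omega>} - prob (L c) \<le> prob {\<omega> \<in> space M. P \<omega> \<and> X \<omega> > - c}"
      by simp
  qed
  show "\<forall>\<^sub>F c in at_top. prob {\<omega> \<in> space M. P \<omega> \<and> X \<omega> > - c} \<le> prob {\<omega> \<in> space M. P \<omega>}"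
    by (intro always_eventually allI finite_measure_mono) auto
  show "((\<lambda>c. prob {\<omega> \<in> space M. P \<omega>} - prob (L c)) \<longlongrightarrow> prob {\<omega> \<in> space M. P \<omega>}) at_top"
    using tendsto_diff[OF tendsto_const prob_le_uminus_tendsto_0[OF assms(1)]] by (simp add: L_def)
qed simp

end

locale stopped_random_walk = prob_space M for M :: "'a measure" +
  fixes \<xi> :: "nat \<Rightarrow> 'a \<Rightarrow> real" and Fil :: "nat \<Rightarrow> 'a measure" and \<sigma> :: "'a \<Rightarrow> enat"
  assumes Fil_space: "\<And>n. space (Fil n) = space M"
    and Fil_sets: "\<And>n. sets (Fil n) \<subseteq> sets M"
    and Fil_mono: "\<And>n. sets (Fil n) \<subseteq> sets (Fil (Suc n))"
    and adapted: "\<And>n. n \<ge> 1 \<Longrightarrow> \<xi> n \<in> borel_measurable (Fil n)"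
    and indep_next: "\<And>n. indep_set (sets (Fil n)) (sets (vimage_algebra (space M) (\<xi> (Suc n)) borel))"
    and ident: "\<And>n. n \<ge> 1 \<Longrightarrow> distr M borel (\<xi> n) = distr M borel (\<xi> 1)"
    and stop: "enat_stopping_time Fil \<sigma>"
    and finite_mean: "(\<integral>\<^sup>+ \<omega>. ennreal_of_enat (\<sigma> \<omega>) \<partial>M) < \<infinity>"
begin

definition tail :: "real \<Rightarrow> real" where
  "tail y = prob {\<omega> \<in> space M. \<xi> 1 \<omega> > y}"

definition mean_stop :: real where
  "mean_stop = enn2real (\<integral>\<^sup>+ \<omega>. ennreal_of_enat (\<sigma> \<omega>) \<partial>M)"

lemma measurable_Fil_mono:
  assumes "i \<le> k" "f \<in> borel_measurable (Fil i)"
  shows "f \<in> borel_measurable (Fil k)"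
proof -
  have "sets (Fil i) \<subseteq> sets (Fil k)"
    using lift_Suc_mono_le[of "\<lambda>n. sets (Fil n)", OF Fil_mono assms(1)] .
  then show ?thesis
    using measurable_mono[of borel borel "Fil i" "Fil k"] Fil_space assms(2) by auto
qed

lemma measurable_Fil_M:
  "f \<in> borel_measurable (Fil i) \<Longrightarrow> f \<in> borel_measurable M"
  using measurable_mono[of borel borel "Fil i" M] Fil_sets Fil_space by auto

lemma rw_measurable_Fil:
  assumes "k \<le> i"
  shows "rw \<xi> k \<in> borel_measurable (Fil i)"
  unfolding rw_def
proof (rule borel_measurable_sum)
  show "\<xi> j \<in> borel_measurable (Fil i)" if "j \<in> {1..k}" for j
    using that assms by (intro measurable_Fil_mono[of j i] adapted) auto
qed

lemma rw_measurable [measurable]: "rw \<xi> k \<in> borel_measurable M"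
  by (rule measurable_Fil_M[OF rw_measurable_Fil[OF order_refl]])

lemma xi_measurable [measurable]: "\<xi> (Suc n) \<in> borel_measurable M"
  by (rule measurable_Fil_M[OF adapted]) simp

lemma stopping_time_greater_Fil: "{\<omega> \<in> space M. enat i < \<sigma> \<omega>} \<in> sets (Fil i)"
proof -
  have "{\<omega> \<in> space M. enat i < \<sigma> \<omega>} = space (Fil i) - {\<omega> \<in> space (Fil i). \<sigma> \<omega> \<le> enat i}"
    using Fil_space by auto
  then show ?thesis
    using stop unfolding enat_stopping_time_def by auto
qed

lemma pred_stopping_time_greater [measurable]: "Measurable.pred M (\<lambda>\<omega>. enat i < \<sigma> \<omega>)"
  using stopping_time_greater_Fil Fil_sets by (auto simp: pred_def)

lemma pred_stopping_time_ge [measurable]: "Measurable.pred M (\<lambda>\<omega>. enat i \<le> \<sigma> \<omega>)"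
proof (cases i)
  case 0
  then show ?thesis
    by (simp add: zero_enat_def[symmetric])
next
  case (Suc j)
  then show ?thesis
    using pred_stopping_time_greater[of j] by (simp add: Suc_ile_eq)
qed

lemma prob_xi_greater: "prob {\<omega> \<in> space M. \<xi> (Suc n) \<omega> > y} = tail y"
proof -
  have "prob {\<omega> \<in> space M. \<xi> (Suc n) \<omega> > y} = measure (distr M borel (\<xi> (Suc n))) {y<..}"
    by (subst measure_distr) (auto simp: vimage_def Int_def conj_commute)
  also have "\<dots> = measure (distr M borel (\<xi> 1)) {y<..}"
    using ident[of "Suc n"] by simp
  also have "\<dots> = tail y"
    unfolding tail_def using xi_measurable[of 0]
    by (subst measure_distr) (auto simp: vimage_def Int_def conj_commute)
  finally show ?thesis .
qed

lemma prob_Fil_inter_xi_greater: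
  assumes "B \<in> sets (Fil n)"
  shows "prob (B \<inter> {\<omega> \<in> space M. \<xi> (Suc n) \<omega> > y}) = prob B * tail y"
proof -
  have "{\<omega> \<in> space M. \<xi> (Suc n) \<omega> > y} = \<xi> (Suc n) -` {y<..} \<inter> space M"
    by auto
  also have "\<dots> \<in> sets (vimage_algebra (space M) (\<xi> (Suc n)) borel)"
    by (rule in_vimage_algebra) simp
  finally show ?thesis
    using indep_setD[OF indep_next[of n] assms] prob_xi_greater by simp
qed

lemma prob_stopping_time_greater_sums:
  "(\<lambda>i. prob {\<omega> \<in> space M. enat i < \<sigma> \<omega>}) sums mean_stop"
  unfolding mean_stop_def using finite_mean by (intro prob_enat_less_sums) auto

lemma mem_A_sigma1_iff:
  "\<omega> \<in> A_sigma1 M \<xi> \<sigma> h x \<longleftrightarrow> \<omega> \<in> space M \<and> (\<exists>n. enat n \<le> \<sigma> \<omega> \<and> rw \<xi> n \<omega> > x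
      \<and> (\<forall>k<n. rw \<xi> k \<omega> \<le> x) \<and> rw \<xi> (n - 1) \<omega> \<le> h x)"
  by (auto simp: A_sigma1_def) (metis first_passage_eq_enat_iff)+

lemma A_sigma1_eq_Union:
  "A_sigma1 M \<xi> \<sigma> h x = (\<Union>n. {\<omega> \<in> space M. enat n \<le> \<sigma> \<omega> \<and> rw \<xi> n \<omega> > x
      \<and> (\<forall>k\<in>{..<n}. rw \<xi> k \<omega> \<le> x) \<and> rw \<xi> (n - 1) \<omega> \<le> h x})"
  by (auto simp: mem_A_sigma1_iff Ball_def)

lemma sets_A_sigma1 [measurable]: "A_sigma1 M \<xi> \<sigma> h x \<in> events"
  unfolding A_sigma1_eq_Union by measurable

lemma prob_A_sigma1_le:
  assumes "x \<ge> 0"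
  shows "prob (A_sigma1 M \<xi> \<sigma> h x) \<le> mean_stop * tail (x - h x)"
proof -
  define U where
    "U i = {\<omega> \<in> space M. enat i < \<sigma> \<omega>} \<inter> {\<omega> \<in> space M. \<xi> (Suc i) \<omega> > x - h x}" for i
  have U_sets: "range U \<subseteq> events"
    unfolding U_def by auto
  have U_sums: "(\<lambda>i. prob (U i)) sums (mean_stop * tail (x - h x))"
    unfolding U_def prob_Fil_inter_xi_greater[OF stopping_time_greater_Fil]
    by (intro sums_mult2 prob_stopping_time_greater_sums)
  have "A_sigma1 M \<xi> \<sigma> h x \<subseteq> (\<Union>i. U i)"
  proof
    fix \<omega> assume "\<omega> \<in> A_sigma1 M \<xi> \<sigma> h x"
    then obtain n where \<omega>: "\<omega> \<in> space M" "enat n \<le> \<sigma> \<omega>" "rw \<xi> n \<omega> > x"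
        "\<forall>k<n. rw \<xi> k \<omega> \<le> x" "rw \<xi> (n - 1) \<omega> \<le> h x"
      by (auto simp: mem_A_sigma1_iff)
    have "n \<noteq> 0"
      using \<omega>(3) assms by (metis not_less rw_0)
    then obtain i where n: "n = Suc i"
      by (cases n) auto
    have "\<xi> (Suc i) \<omega> > x - h x" "enat i < \<sigma> \<omega>"
      using \<omega>(2,3,5) unfolding n by (simp_all add: rw_Suc Suc_ile_eq)
    then show "\<omega> \<in> (\<Union>i. U i)"
      using \<omega>(1) unfolding U_def by auto
  qed
  then have "prob (A_sigma1 M \<xi> \<sigma> h x) \<le> prob (\<Union>i. U i)"
    using U_sets by (intro finite_measure_mono) auto
  also have "\<dots> \<le> (\<Sum>i. prob (U i))"
    using U_sets U_sums by (intro finite_measure_subadditive_countably) (auto simp: sums_iff)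
  also have "\<dots> = mean_stop * tail (x - h x)"
    using U_sums by (simp add: sums_iff)
  finally show ?thesis .
qed

definition stays_below :: "real \<Rightarrow> real \<Rightarrow> nat \<Rightarrow> 'a set" where
  "stays_below y c i =
     {\<omega> \<in> space M. enat i < \<sigma> \<omega> \<and> (\<forall>k\<in>{..i}. rw \<xi> k \<omega> \<le> y) \<and> rw \<xi> i \<omega> > - c}"

lemma stays_below_Fil: "stays_below y c i \<in> sets (Fil i)"
proof -
  have "Measurable.pred (Fil i) (\<lambda>\<omega>. rw \<xi> k \<omega> \<le> y)" if "k \<in> {..i}" for k
  proof -
    have [measurable]: "rw \<xi> k \<in> borel_measurable (Fil i)"
      using that by (simp add: rw_measurable_Fil)
    show ?thesis
      by measurable
  qed
  then have "Measurable.pred (Fil i) (\<lambda>\<omega>. \<forall>k\<in>{..i}. rw \<xi> k \<omega> \<le> y)"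
    by (rule pred_intros_countable_bounded)
  moreover have "Measurable.pred (Fil i) (\<lambda>\<omega>. rw \<xi> i \<omega> > - c)"
    using rw_measurable_Fil[of i i] by measurable
  moreover have "Measurable.pred (Fil i) (\<lambda>\<omega>. enat i < \<sigma> \<omega>)"
    using stopping_time_greater_Fil[of i] Fil_space by (simp add: pred_def)
  ultimately have "Measurable.pred (Fil i)
      (\<lambda>\<omega>. enat i < \<sigma> \<omega> \<and> (\<forall>k\<in>{..i}. rw \<xi> k \<omega> \<le> y) \<and> rw \<xi> i \<omega> > - c)"
    by (intro pred_intros_logic)
  then show ?thesis
    unfolding stays_below_def pred_def using Fil_space by simp
qed

lemma stays_below_events: "stays_below y c i \<in> events"
  using Fil_sets stays_below_Fil by blast

lemma prob_A_sigma1_ge_sum: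
  assumes "h x \<le> x"
  shows "(\<Sum>i<N. prob (stays_below (h x) c i)) * tail (x + c) \<le> prob (A_sigma1 M \<xi> \<sigma> h x)"
proof -
  define E where "E i = stays_below (h x) c i \<inter> {\<omega> \<in> space M. \<xi> (Suc i) \<omega> > x + c}" for i
  have E_sets: "E i \<in> events" for i
    unfolding E_def by (intro sets.Int stays_below_events) measurable
  have E_crosses: "rw \<xi> (Suc i) \<omega> > x" if "\<omega> \<in> E i" for i \<omega>
    using that unfolding E_def stays_below_def by (auto simp: rw_Suc)
  have E_below: "rw \<xi> k \<omega> \<le> h x" if "\<omega> \<in> E i" "k \<le> i" for i k \<omega>
    using that unfolding E_def stays_below_def by auto
  have E_A: "E i \<subseteq> A_sigma1 M \<xi> \<sigma> h x" for i
  proof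
    fix \<omega> assume \<omega>: "\<omega> \<in> E i"
    then have "enat (Suc i) \<le> \<sigma> \<omega>" "\<omega> \<in> space M"
      unfolding E_def stays_below_def by (auto simp: Suc_ile_eq)
    moreover have "rw \<xi> k \<omega> \<le> x" if "k < Suc i" for k
    proof -
      have "rw \<xi> k \<omega> \<le> h x"
        using E_below[OF \<omega>] that by simp
      with assms show ?thesis
        by linarith
    qed
    moreover have "rw \<xi> (Suc i - 1) \<omega> \<le> h x"
      using E_below[OF \<omega>] by simp
    ultimately show "\<omega> \<in> A_sigma1 M \<xi> \<sigma> h x"
      unfolding mem_A_sigma1_iff using E_crosses[OF \<omega>] by blast
  qed
  have "disjoint_family_on E {..<N}"
  proof -
    have "E i \<inter> E j = {}" if "i < j" for i j
    proof -
      have False if "\<omega> \<in> E i" "\<omega> \<in> E j" for \<omega>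
        using E_crosses[OF that(1)] E_below[OF that(2), of "Suc i"] \<open>i < j\<close> assms by simp
      then show ?thesis
        by blast
    qed
    then show ?thesis
      unfolding disjoint_family_on_def by (metis inf_commute linorder_neqE_nat)
  qed
  have "(\<Sum>i<N. prob (stays_below (h x) c i)) * tail (x + c) = (\<Sum>i<N. prob (E i))"
    unfolding E_def prob_Fil_inter_xi_greater[OF stays_below_Fil] by (simp add: sum_distrib_right)
  also have "\<dots> = prob (\<Union>i\<in>{..<N}. E i)"
    using \<open>disjoint_family_on E {..<N}\<close> E_sets by (intro finite_measure_finite_Union[symmetric]) auto
  also have "\<dots> \<le> prob (A_sigma1 M \<xi> \<sigma> h x)"
    using E_A by (intro finite_measure_mono) auto
  finally show ?thesis .
qed

lemma prob_stays_below_ge: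
  "prob {\<omega> \<in> space M. enat i < \<sigma> \<omega> \<and> rw \<xi> i \<omega> > - c}
     - (\<Sum>k\<le>i. prob {\<omega> \<in> space M. rw \<xi> k \<omega> > y}) \<le> prob (stays_below y c i)"
proof -
  let ?D = "\<Union>k\<in>{..i}. {\<omega> \<in> space M. rw \<xi> k \<omega> > y}"
  have "{\<omega> \<in> space M. enat i < \<sigma> \<omega> \<and> rw \<xi> i \<omega> > - c} \<subseteq> stays_below y c i \<union> ?D"
    unfolding stays_below_def by auto
  then have "prob {\<omega> \<in> space M. enat i < \<sigma> \<omega> \<and> rw \<xi> i \<omega> > - c} \<le> prob (stays_below y c i \<union> ?D)"
    using stays_below_events by (intro finite_measure_mono) auto
  also have "\<dots> \<le> prob (stays_below y c i) + prob ?D"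
    using stays_below_events by (intro measure_subadditive) auto
  also have "prob ?D \<le> (\<Sum>k\<le>i. prob {\<omega> \<in> space M. rw \<xi> k \<omega> > y})"
    by (intro finite_measure_subadditive_finite) auto
  finally show ?thesis
    by simp
qed

lemma tail_shift_ratio_tendsto:
  assumes "((\<lambda>x. tail (x - c) / tail x) \<longlongrightarrow> 1) at_top"
  shows "((\<lambda>x. tail (x + c) / tail x) \<longlongrightarrow> 1) at_top"
proof -
  have "filterlim (\<lambda>x::real. c + x) at_top at_top"
    by (rule filterlim_tendsto_add_at_top[OF tendsto_const filterlim_ident])
  from filterlim_compose[OF assms this]
  have "((\<lambda>x. tail x / tail (x + c)) \<longlongrightarrow> 1) at_top"
    by (simp add: add.commute)
  from tendsto_inverse[OF this]
  show ?thesis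
    by simp
qed

lemma eventually_prob_A_sigma1_ratio_less:
  assumes h_tail: "((\<lambda>x. tail (x - h x) / tail x) \<longlongrightarrow> 1) at_top"
    and "mean_stop < b"
  shows "\<forall>\<^sub>F x in at_top. prob (A_sigma1 M \<xi> \<sigma> h x) / tail x < b"
proof -
  have "((\<lambda>x. mean_stop * (tail (x - h x) / tail x)) \<longlongrightarrow> mean_stop * 1) at_top"
    by (intro tendsto_intros h_tail)
  then have "\<forall>\<^sub>F x in at_top. mean_stop * (tail (x - h x) / tail x) < b"
    using order_tendstoD(2) assms(2) by simp
  moreover have "\<forall>\<^sub>F x in at_top. x \<ge> (0::real)"
    by (rule eventually_ge_at_top)
  ultimately show ?thesis
  proof eventually_elim
    case (elim x)
    have "prob (A_sigma1 M \<xi> \<sigma> h x) / tail x \<le> mean_stop * tail (x - h x) / tail x"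
      using prob_A_sigma1_le[OF elim(2)] by (intro divide_right_mono) (auto simp: tail_def)
    with elim(1) show ?case
      by simp
  qed
qed

lemma eventually_prob_A_sigma1_ratio_greater:
  assumes h_le: "\<And>x. x \<ge> 0 \<Longrightarrow> h x \<le> x"
    and h_top: "filterlim h at_top at_top"
    and long_tailed: "\<And>c. c > 0 \<Longrightarrow> ((\<lambda>x. tail (x - c) / tail x) \<longlongrightarrow> 1) at_top"
    and tail_pos: "\<And>y. tail y > 0"
    and "a < mean_stop"
  shows "\<forall>\<^sub>F x in at_top. a < prob (A_sigma1 M \<xi> \<sigma> h x) / tail x"
proof -
  define C where "C c i = prob {\<omega> \<in> space M. enat i < \<sigma> \<omega> \<and> rw \<xi> i \<omega> > - c}" for c i
  define T where "T k y = prob {\<omega> \<in> space M. rw \<xi> k \<omega> > y}" for k y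
  obtain N where N: "a < (\<Sum>i<N. prob {\<omega> \<in> space M. enat i < \<sigma> \<omega>})"
    using order_tendstoD(1)[OF prob_stopping_time_greater_sums[unfolded sums_def] assms(5)]
    by (auto simp: eventually_sequentially)
  have "((\<lambda>c. \<Sum>i<N. C c i) \<longlongrightarrow> (\<Sum>i<N. prob {\<omega> \<in> space M. enat i < \<sigma> \<omega>})) at_top"
    unfolding C_def
    by (intro tendsto_sum prob_conj_greater_uminus_tendsto rw_measurable pred_stopping_time_greater)
  from eventually_conj[OF order_tendstoD(1)[OF this N] eventually_gt_at_top[of 0]]
  obtain c where c: "a < (\<Sum>i<N. C c i)" "c > 0"
    by (auto simp: eventually_at_top_linorder)
  have T_h: "((\<lambda>x. T k (h x)) \<longlongrightarrow> 0) at_top" for k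
    unfolding T_def using filterlim_compose[OF prob_greater_tendsto_0[OF rw_measurable] h_top] .
  have "((\<lambda>x. (\<Sum>i<N. C c i - (\<Sum>k\<le>i. T k (h x))) * (tail (x + c) / tail x))
          \<longlongrightarrow> (\<Sum>i<N. C c i - (\<Sum>k\<le>i. 0)) * 1) at_top"
    by (intro tendsto_intros T_h tail_shift_ratio_tendsto[OF long_tailed[OF c(2)]])
  then have "\<forall>\<^sub>F x in at_top. a < (\<Sum>i<N. C c i - (\<Sum>k\<le>i. T k (h x))) * (tail (x + c) / tail x)"
    using order_tendstoD(1) c(1) by simp
  moreover have "\<forall>\<^sub>F x in at_top. x \<ge> (0::real)"
    by (rule eventually_ge_at_top)
  ultimately show ?thesis
  proof eventually_elim
    case (elim x)
    have "C c i - (\<Sum>k\<le>i. T k (h x)) \<le> prob (stays_below (h x) c i)" for i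
      unfolding C_def T_def by (rule prob_stays_below_ge)
    then have "(\<Sum>i<N. C c i - (\<Sum>k\<le>i. T k (h x))) * tail (x + c)
          \<le> (\<Sum>i<N. prob (stays_below (h x) c i)) * tail (x + c)"
      by (intro mult_right_mono sum_mono less_imp_le[OF tail_pos])
    also have "\<dots> \<le> prob (A_sigma1 M \<xi> \<sigma> h x)"
      using h_le[OF elim(2)] by (rule prob_A_sigma1_ge_sum)
    finally have "(\<Sum>i<N. C c i - (\<Sum>k\<le>i. T k (h x))) * (tail (x + c) / tail x)
        \<le> prob (A_sigma1 M \<xi> \<sigma> h x) / tail x"
      using tail_pos[of x] by (simp add: divide_right_mono)
    with elim(1) show ?case
      by linarith
  qed
qed

lemma prob_A_sigma1_ratio_tendsto:
  assumes "\<And>x. x \<ge> 0 \<Longrightarrow> h x \<le> x"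
    and "filterlim h at_top at_top"
    and "((\<lambda>x. tail (x - h x) / tail x) \<longlongrightarrow> 1) at_top"
    and "\<And>c. c > 0 \<Longrightarrow> ((\<lambda>x. tail (x - c) / tail x) \<longlongrightarrow> 1) at_top"
    and "\<And>y. tail y > 0"
  shows "((\<lambda>x. prob (A_sigma1 M \<xi> \<sigma> h x) / tail x) \<longlongrightarrow> mean_stop) at_top"
proof (rule order_tendstoI)
  show "\<forall>\<^sub>F x in at_top. a < prob (A_sigma1 M \<xi> \<sigma> h x) / tail x" if "a < mean_stop" for a
    using assms(1,2,4,5) that by (rule eventually_prob_A_sigma1_ratio_greater)
  show "\<forall>\<^sub>F x in at_top. prob (A_sigma1 M \<xi> \<sigma> h x) / tail x < b" if "mean_stop < b" for b
    using assms(3) that by (rule eventually_prob_A_sigma1_ratio_less)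
qed

end

theorem lemma1:
  fixes M :: "'a measure" and \<xi> :: "nat \<Rightarrow> 'a \<Rightarrow> real"
    and Fil :: "nat \<Rightarrow> 'a measure" and \<sigma> :: "'a \<Rightarrow> enat" and h :: "real \<Rightarrow> real"
  assumes P: "prob_space M"
    \<comment> \<open>i.i.d. with finite negative mean\<close>
    and rv: "\<And>n. n \<ge> 1 \<Longrightarrow> \<xi> n \<in> borel_measurable M"
    and indep: "prob_space.indep_vars M (\<lambda>_. borel) \<xi> {1..}"
    and ident: "\<And>n. n \<ge> 1 \<Longrightarrow> distr M borel (\<xi> n) = distr M borel (\<xi> 1)"
    and integ: "integrable M (\<xi> 1)"
    and neg_mean: "prob_space.expectation M (\<xi> 1) < 0"
    \<comment> \<open>long-tailed distribution; \<open>F\<^sup>-(x) = P(\<xi>_1 > x)\<close>\<close>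
    and tail_pos: "\<And>x. measure M {\<omega> \<in> space M. \<xi> 1 \<omega> > x} > 0"
    and long_tailed: "\<And>c. c > 0 \<Longrightarrow>
        ((\<lambda>x. measure M {\<omega> \<in> space M. \<xi> 1 \<omega> > x - c} / measure M {\<omega> \<in> space M. \<xi> 1 \<omega> > x})
          \<longlongrightarrow> 1) at_top"
    \<comment> \<open>conditions (h1)-(h4) on \<open>h : R+ \<rightarrow> R+\<close>\<close>
    and h_nonneg: "\<And>x. x \<ge> 0 \<Longrightarrow> h x \<ge> 0"
    and h1: "\<And>x. x \<ge> 0 \<Longrightarrow> h x \<le> x / 2"
    and h2: "filterlim h at_top at_top"
    and h3: "((\<lambda>x. measure M {\<omega> \<in> space M. \<xi> 1 \<omega> > x - h x} / measure M {\<omega> \<in> space M. \<xi> 1 \<omega> > x})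
          \<longlongrightarrow> 1) at_top"
    and h4: "\<exists>x0. \<forall>x\<ge>x0. \<forall>t\<ge>0. h (x + t) \<le> h x + t"
    \<comment> \<open>admissible filtration\<close>
    and Fil_space: "\<And>n. space (Fil n) = space M"
    and Fil_sets: "\<And>n. sets (Fil n) \<subseteq> sets M"
    and Fil_mono: "\<And>n. sets (Fil n) \<subseteq> sets (Fil (Suc n))"
    and adapted: "\<And>n. n \<ge> 1 \<Longrightarrow> \<xi> n \<in> borel_measurable (Fil n)"
    and indep_next: "\<And>n. prob_space.indep_set M (sets (Fil n))
                              (sets (vimage_algebra (space M) (\<xi> (Suc n)) borel))"
    \<comment> \<open>stopping time with finite mean\<close>
    and stop: "enat_stopping_time Fil \<sigma>"
    and fin_mean: "(\<integral>\<^sup>+ \<omega>. ennreal_of_enat (\<sigma> \<omega>) \<partial>M) < \<infinity>"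
  shows "((\<lambda>x. measure M (A_sigma1 M \<xi> \<sigma> h x) / measure M {\<omega> \<in> space M. \<xi> 1 \<omega> > x})
           \<longlongrightarrow> enn2real (\<integral>\<^sup>+ \<omega>. ennreal_of_enat (\<sigma> \<omega>) \<partial>M)) at_top"
proof -
  interpret W: stopped_random_walk M \<xi> Fil \<sigma>
    by (intro stopped_random_walk.intro stopped_random_walk_axioms.intro P)
      (fact Fil_space Fil_sets Fil_mono adapted indep_next ident stop fin_mean)+
  have "h x \<le> x" if "x \<ge> 0" for x
    using h1[OF that] that by linarith
  then have "((\<lambda>x. measure M (A_sigma1 M \<xi> \<sigma> h x) / W.tail x) \<longlongrightarrow> W.mean_stop) at_top"
    by (rule W.prob_A_sigma1_ratio_tendsto)
      (use h2 h3 long_tailed tail_pos in \<open>simp_all add: W.tail_def\<close>)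
  then show ?thesis
    by (simp add: W.tail_def W.mean_stop_def)
qed

end
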